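(* Let $d$, $n$ and $m$ be integers with $d\geq 3$, $n\geq 6$ and $3n-5\leq m\leq\binom{n}{2}$. For each $G\in T_{n,m}$ it holds that $\lambda_{st}^d(G)\leq n-1$, with equality if and only if $G\in T_{n,m}^u$.
   Context: All graphs are finite, simple and undirected. A two-terminal graph is a graph $G$ together with two distinguished vertices $s,t$ (the terminals). $T_{n,m}$ denotes the set of all pairwise nonisomorphic (with isomorphisms preserving the set of terminals) two-terminal graphs with $n$ vertices and $m$ edges. For a positive integer $d$, a $d$-pathset of a two-terminal graph $G$ is a spanning subgraph of $G$ containing a path of length (number of edges) at most $d$ joining $s$ and $t$; $N_i^d(G)$ is the number of $d$-pathsets of $G$ with exactly $i$ edges. For $G\in T_{n,m}$ and $i\in\{1,\ldots,m\}$, $B_i^d(G)=\binom{m}{i}-N_{m-i}^d(G)$ is the number of $i$-element edge sets $U$ of $G$ such that $G-U$ is not a $d$-pathset (i.e. contains no $s$–$t$ path of length at most $d$). $\lambda_{st}^d(G)$ is the least positive integer $j$ with $B_j^d(G)>0$. A vertex is universal if it is adjacent to all other vertices; $T_{n,m}^u$ is the set of graphs in $T_{n,m}$ in which both terminals are universal. *)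

theory Defs
  imports Main
begin

definition two_terminal_graph :: "'a set \<Rightarrow> 'a set set \<Rightarrow> 'a \<Rightarrow> 'a \<Rightarrow> bool" where
  "two_terminal_graph V E s t \<longleftrightarrow>
     finite V \<and> (\<forall>e\<in>E. e \<subseteq> V \<and> card e = 2) \<and> s \<in> V \<and> t \<in> V \<and> s \<noteq> t"

definition is_path :: "'a set set \<Rightarrow> 'a list \<Rightarrow> 'a \<Rightarrow> 'a \<Rightarrow> bool" where
  "is_path F p s t \<longleftrightarrow> p \<noteq> [] \<and> hd p = s \<and> last p = t \<and> distinct p \<and>
     (\<forall>i. Suc i < length p \<longrightarrow> {p ! i, p ! Suc i} \<in> F)"

definition is_d_pathset :: "nat \<Rightarrow> 'a set set \<Rightarrow> 'a \<Rightarrow> 'a \<Rightarrow> bool" where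
  "is_d_pathset d F s t \<longleftrightarrow> (\<exists>p. is_path F p s t \<and> length p - 1 \<le> d)"

definition B_count :: "nat \<Rightarrow> 'a set set \<Rightarrow> 'a \<Rightarrow> 'a \<Rightarrow> nat \<Rightarrow> nat" where
  "B_count d E s t i = card {U. U \<subseteq> E \<and> card U = i \<and> \<not> is_d_pathset d (E - U) s t}"

definition lambda_st :: "nat \<Rightarrow> 'a set set \<Rightarrow> 'a \<Rightarrow> 'a \<Rightarrow> nat" where
  "lambda_st d E s t = (LEAST j. 0 < j \<and> 0 < B_count d E s t j)"

definition universal :: "'a set \<Rightarrow> 'a set set \<Rightarrow> 'a \<Rightarrow> bool" where
  "universal V E v \<longleftrightarrow> (\<forall>w\<in>V. w \<noteq> v \<longrightarrow> {v, w} \<in> E)"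

end

theory Submission
  imports Defs
begin

(* Deleting the at most n - 1 edges at a terminal destroys every s-t path, so lambda <= n - 1,
   and a terminal that is not universal has at most n - 2 edges.  If both terminals are universal,
   the edge st and the n - 2 paths s-w-t are pairwise edge-disjoint s-t paths of length at most 2,
   so fewer than n - 1 deleted edges leave one of them intact. *)

lemma is_path_rev: "is_path F p s t \<Longrightarrow> is_path F (rev p) t s"
  unfolding is_path_def
proof (elim conjE, intro conjI allI impI)
  fix i assume edges: "\<forall>i. Suc i < length p \<longrightarrow> {p ! i, p ! Suc i} \<in> F"
    and i: "Suc i < length (rev p)"
  have "{p ! (length p - Suc (Suc i)), p ! Suc (length p - Suc (Suc i))} \<in> F"
    using edges i by simp
  moreover have "Suc (length p - Suc (Suc i)) = length p - Suc i" using i by simp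
  ultimately show "{rev p ! i, rev p ! Suc i} \<in> F"
    using i by (simp add: rev_nth insert_commute)
qed (auto simp: hd_rev last_rev)

lemma is_path_first_edge:
  assumes "is_path F p s t" "s \<noteq> t"
  shows "\<exists>w. {s, w} \<in> F"
proof -
  obtain x y q where "p = x # y # q"
    using assms unfolding is_path_def by (metis last.simps list.exhaust list.sel(1))
  then show ?thesis using assms unfolding is_path_def by force
qed

lemma is_d_pathset_mono:
  "F \<subseteq> F' \<Longrightarrow> is_d_pathset d F s t \<Longrightarrow> is_d_pathset d F' s t"
  unfolding is_d_pathset_def is_path_def by blast

lemma not_is_d_pathset_remove_incident:
  assumes "s \<noteq> t" "v \<in> {s, t}"
  shows "\<not> is_d_pathset d (E - {e\<in>E. v \<in> e}) s t"
proof
  assume "is_d_pathset d (E - {e\<in>E. v \<in> e}) s t"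
  then obtain p where p: "is_path (E - {e\<in>E. v \<in> e}) p s t" unfolding is_d_pathset_def by blast
  have "\<exists>w. {s, w} \<in> E - {e\<in>E. v \<in> e}" using is_path_first_edge[OF p assms(1)] .
  moreover have "\<exists>w. {t, w} \<in> E - {e\<in>E. v \<in> e}"
    using is_path_first_edge[OF is_path_rev[OF p]] assms(1) by simp
  ultimately show False using assms(2) by auto
qed

lemma card_incident_edges_le_card_neighbours:
  assumes "finite V" "\<forall>e\<in>E. e \<subseteq> V \<and> card e = 2"
  shows "card {e\<in>E. v \<in> e} \<le> card {w\<in>V. w \<noteq> v \<and> {v, w} \<in> E}"
proof -
  have "{e\<in>E. v \<in> e} \<subseteq> (\<lambda>w. {v, w}) ` {w\<in>V. w \<noteq> v \<and> {v, w} \<in> E}"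
  proof
    fix e assume e: "e \<in> {e\<in>E. v \<in> e}"
    then obtain w where "e = {v, w}" "w \<noteq> v"
      using assms(2) by (auto simp: card_2_iff doubleton_eq_iff)
    with e assms(2) show "e \<in> (\<lambda>w. {v, w}) ` {w\<in>V. w \<noteq> v \<and> {v, w} \<in> E}" by auto
  qed
  then have "card {e\<in>E. v \<in> e} \<le> card ((\<lambda>w. {v, w}) ` {w\<in>V. w \<noteq> v \<and> {v, w} \<in> E})"
    using assms(1) by (intro card_mono) auto
  also have "\<dots> \<le> card {w\<in>V. w \<noteq> v \<and> {v, w} \<in> E}" by (rule card_image_le) (use assms(1) in simp)
  finally show ?thesis .
qed

lemma card_incident_edges_le:
  assumes "finite V" "\<forall>e\<in>E. e \<subseteq> V \<and> card e = 2" "v \<in> V"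
  shows "card {e\<in>E. v \<in> e} \<le> card V - 1"
proof -
  have "card {e\<in>E. v \<in> e} \<le> card {w\<in>V. w \<noteq> v \<and> {v, w} \<in> E}"
    using assms(1,2) by (rule card_incident_edges_le_card_neighbours)
  also have "\<dots> \<le> card (V - {v})"
    using assms(1) by (intro card_mono) auto
  also have "\<dots> = card V - 1" using assms(3) by simp
  finally show ?thesis .
qed

lemma card_incident_edges_le_if_not_universal:
  assumes "finite V" "\<forall>e\<in>E. e \<subseteq> V \<and> card e = 2" "v \<in> V" "\<not> universal V E v"
  shows "card {e\<in>E. v \<in> e} \<le> card V - 2"
proof -
  obtain w where w: "w \<in> V" "w \<noteq> v" "{v, w} \<notin> E" using assms(4) unfolding universal_def by blast
  have "card {e\<in>E. v \<in> e} \<le> card {w\<in>V. w \<noteq> v \<and> {v, w} \<in> E}"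
    using assms(1,2) by (rule card_incident_edges_le_card_neighbours)
  also have "\<dots> \<le> card (V - {v, w})"
    using assms(1) w by (intro card_mono) auto
  also have "\<dots> = card V - 2" using assms(3) w by (simp add: card_Diff_subset)
  finally show ?thesis .
qed

lemma B_count_pos:
  assumes "finite E" "S \<subseteq> E" "\<not> is_d_pathset d (E - S) s t" "card S \<le> k" "k \<le> card E"
  shows "0 < B_count d E s t k"
proof -
  have "finite S" using assms(1,2) finite_subset by blast
  have "k - card S \<le> card (E - S)"
    using assms(4,5) card_Diff_subset[OF \<open>finite S\<close> assms(2)] by linarith
  then obtain R where R: "R \<subseteq> E - S" "card R = k - card S" by (metis obtain_subset_with_card_n)
  have "finite R" using R assms(1) finite_subset by blast
  have "card (S \<union> R) = k"
    using R assms(4) card_Un_disjoint[OF \<open>finite S\<close> \<open>finite R\<close>] by auto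
  moreover have "\<not> is_d_pathset d (E - (S \<union> R)) s t"
    using assms(3) is_d_pathset_mono[of "E - (S \<union> R)" "E - S"] by blast
  moreover have "S \<union> R \<subseteq> E" using R assms(2) by blast
  ultimately have "S \<union> R \<in> {U. U \<subseteq> E \<and> card U = k \<and> \<not> is_d_pathset d (E - U) s t}" by blast
  moreover have "finite {U. U \<subseteq> E \<and> card U = k \<and> \<not> is_d_pathset d (E - U) s t}"
    by (rule finite_subset[of _ "Pow E"]) (use assms(1) in auto)
  ultimately show ?thesis unfolding B_count_def card_gt_0_iff by blast
qed

lemma lambda_st_le:
  "0 < k \<Longrightarrow> 0 < B_count d E s t k \<Longrightarrow> lambda_st d E s t \<le> k"
  unfolding lambda_st_def by (intro Least_le) simp

lemma lambda_st_ge: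
  assumes "0 < j" "0 < B_count d E s t j"
    and pathset: "\<And>U. U \<subseteq> E \<Longrightarrow> card U < k \<Longrightarrow> is_d_pathset d (E - U) s t"
  shows "k \<le> lambda_st d E s t"
proof -
  have "0 < B_count d E s t (lambda_st d E s t)"
    using LeastI[of "\<lambda>j. 0 < j \<and> 0 < B_count d E s t j" j] assms(1,2)
    unfolding lambda_st_def by blast
  then obtain U where "U \<subseteq> E" "card U = lambda_st d E s t" "\<not> is_d_pathset d (E - U) s t"
    unfolding B_count_def by (metis (mono_tags, lifting) card.empty empty_Collect_eq less_irrefl)
  then show ?thesis using pathset[of U] by (metis not_le)
qed

lemma is_d_pathset_if_universal_terminals:
  assumes "finite V" "s \<in> V" "t \<in> V" "s \<noteq> t" "2 \<le> d"
    and "universal V E s" "universal V E t"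
    and "finite U" "card U < card V - 1"
  shows "is_d_pathset d (E - U) s t"
proof (cases "\<exists>w\<in>V - {s, t}. {s, w} \<notin> U \<and> {w, t} \<notin> U")
  case True
  then obtain w where w: "w \<in> V - {s, t}" "{s, w} \<notin> U" "{w, t} \<notin> U" by blast
  have "{s, w} \<in> E" "{w, t} \<in> E"
    using w assms(6,7) unfolding universal_def by (auto simp: insert_commute)
  then have "is_path (E - U) [s, w, t] s t"
    using w assms(4) unfolding is_path_def by (auto simp: less_Suc_eq nth_Cons')
  then show ?thesis using assms(5) unfolding is_d_pathset_def by force
next
  case False
  \<comment> \<open>each inner vertex w selects its own edge of U on the path s-w-t\<close>
  define hit where "hit w = (if {s, w} \<in> U then {s, w} else {w, t})" for w
  have "{s, t} \<notin> U"
  proof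
    assume "{s, t} \<in> U"
    have "hit ` (V - {s, t}) \<subseteq> U - {{s, t}}"
      using False assms(4) unfolding hit_def by (auto simp: doubleton_eq_iff)
    moreover have "inj_on hit (V - {s, t})"
      unfolding inj_on_def hit_def using assms(4) by (auto simp: doubleton_eq_iff split: if_splits)
    ultimately have "card (V - {s, t}) \<le> card (U - {{s, t}})"
      using assms(8) by (intro card_inj_on_le) auto
    moreover have "0 < card U" using \<open>{s, t} \<in> U\<close> assms(8) card_gt_0_iff by blast
    ultimately show False using \<open>{s, t} \<in> U\<close> assms(2-4,8,9) by auto
  qed
  moreover have "{s, t} \<in> E" using assms(3,4,6) unfolding universal_def by auto
  ultimately have "is_path (E - U) [s, t] s t"
    using assms(4) unfolding is_path_def by (auto simp: less_Suc_eq)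
  then show ?thesis using assms(5) unfolding is_d_pathset_def by force
qed

lemma two_terminal_graph_finite_edges: "two_terminal_graph V E s t \<Longrightarrow> finite E"
  unfolding two_terminal_graph_def by (metis Pow_iff finite_Pow_iff finite_subset subsetI)

lemma B_count_pos_incident:
  assumes "two_terminal_graph V E s t" "v \<in> {s, t}" "card {e\<in>E. v \<in> e} \<le> k" "k \<le> card E"
  shows "0 < B_count d E s t k"
proof (rule B_count_pos[OF two_terminal_graph_finite_edges[OF assms(1)] _ _ assms(3,4)])
  show "\<not> is_d_pathset d (E - {e\<in>E. v \<in> e}) s t"
    using assms(1,2) unfolding two_terminal_graph_def by (intro not_is_d_pathset_remove_incident) auto
qed blast

lemma lambda_st_le_card_incident:
  assumes "two_terminal_graph V E s t" "v \<in> {s, t}" "card {e\<in>E. v \<in> e} \<le> k" "k \<le> card E"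
    and "0 < k"
  shows "lambda_st d E s t \<le> k"
  using assms(5) B_count_pos_incident[OF assms(1-4)] by (rule lambda_st_le)

lemma lambda_st_ge_if_universal_terminals:
  assumes "two_terminal_graph V E s t" "2 \<le> d" "universal V E s" "universal V E t"
    and "card V - 1 \<le> card E"
  shows "card V - 1 \<le> lambda_st d E s t"
proof (rule lambda_st_ge)
  have G: "finite V" "\<forall>e\<in>E. e \<subseteq> V \<and> card e = 2" "s \<in> V" "t \<in> V" "s \<noteq> t"
    using assms(1) unfolding two_terminal_graph_def by auto
  have "card {s, t} \<le> card V" using G by (intro card_mono) auto
  then show "0 < card V - 1" using G(5) by simp
  show "0 < B_count d E s t (card V - 1)"
    using B_count_pos_incident[OF assms(1) _ card_incident_edges_le[OF G(1-3)] assms(5)] by simp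
  show "is_d_pathset d (E - U) s t" if "U \<subseteq> E" "card U < card V - 1" for U
    using is_d_pathset_if_universal_terminals[OF G(1,3-5) assms(2-4) _ that(2)] that(1)
      two_terminal_graph_finite_edges[OF assms(1)] finite_subset by blast
qed

theorem lemma12:
  fixes V :: "'a set" and E :: "'a set set" and s t :: 'a and d n m :: nat
  assumes "two_terminal_graph V E s t"
    and "card V = n" and "card E = m"
    and "d \<ge> 3" and "n \<ge> 6" and "3 * n - 5 \<le> m" and "m \<le> n choose 2"
  shows "lambda_st d E s t \<le> n - 1 \<and>
         (lambda_st d E s t = n - 1 \<longleftrightarrow> universal V E s \<and> universal V E t)"
proof -
  have G: "finite V" "\<forall>e\<in>E. e \<subseteq> V \<and> card e = 2" "s \<in> V" "t \<in> V"
    using assms(1) unfolding two_terminal_graph_def by auto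
  have "n - 1 \<le> m" using assms(5,6) by linarith
  then have upper: "lambda_st d E s t \<le> n - 1"
    using lambda_st_le_card_incident[OF assms(1), of s] card_incident_edges_le[OF G(1-3)] assms(2,3,5)
    by simp
  have not_universal: "lambda_st d E s t \<le> n - 2" if "v \<in> {s, t}" "\<not> universal V E v" for v
  proof (rule lambda_st_le_card_incident[OF assms(1) that(1)])
    show "card {e\<in>E. v \<in> e} \<le> n - 2"
      using card_incident_edges_le_if_not_universal[OF G(1,2) _ that(2)] that(1) G(3,4) assms(2) by blast
  qed (use \<open>n - 1 \<le> m\<close> assms(3,5) in simp_all)
  show ?thesis
  proof (rule conjI[OF upper], rule iffI)
    assume eq: "lambda_st d E s t = n - 1"
    have "universal V E v" if "v \<in> {s, t}" for v
      using not_universal[OF that] eq assms(5) by (cases "universal V E v") simp_all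
    then show "universal V E s \<and> universal V E t" by blast
  next
    assume "universal V E s \<and> universal V E t"
    then have "n - 1 \<le> lambda_st d E s t"
      using lambda_st_ge_if_universal_terminals[OF assms(1)] \<open>n - 1 \<le> m\<close> assms(2-4) by simp
    then show "lambda_st d E s t = n - 1" using upper by simp
  qed
qed

end
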